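(* Let $n\geq3$, let $S_n$ act on $V=\mathbb{C}^n$ by the natural permutation representation, and let $\kappa^L$ be a pre-Drinfeld orbifold algebra map for this action. If $\kappa^L$ is supported both on the identity and off the identity (i.e., $\kappa^L_1\neq0$ and $\kappa^L_g\neq 0$ for some $g\neq1$), then $\kappa^L$ does not lift to a Drinfeld orbifold algebra map.
   Context: $S_n$ acts by $\sigma e_i=e_{\sigma(i)}$; $V^g$ is the fixed space of $g$; $\mathrm{Alt}_3$ is the set of cyclic permutations of $\{1,2,3\}$. A linear (resp. constant) $2$-cochain is $\alpha=\sum_g\alpha_g g$ with $\alpha_g:\bigwedge^2V\to V$ (resp. $\to\mathbb{C}$); it is $S_n$-invariant if $h(\alpha_g(v,w))=\alpha_{hgh^{-1}}(hv,hw)$ for all $g,h,v,w$. A pre-Drinfeld orbifold algebra map is an $S_n$-invariant linear 2-cochain $\kappa^L$ with $\operatorname{im}\kappa^L_g\subseteq V^g$ for all $g$ and $\sum_{\sigma\in\mathrm{Alt}_3}\kappa^L_g(v_{\sigma(2)},v_{\sigma(3)})(gv_{\sigma(1)}-v_{\sigma(1)})=0$ in $S(V)$ for all $g,v_1,v_2,v_3$. It lifts to a Drinfeld orbifold algebra map if there is an $S_n$-invariant constant 2-cochain $\kappa^C$ such that for all $g,v_1,v_2,v_3$: $\sum_{\sigma\in\mathrm{Alt}_3}\sum_{xy=g}\kappa^L_x(v_{\sigma(1)}+yv_{\sigma(1)},\kappa^L_y(v_{\sigma(2)},v_{\sigma(3)}))=2\sum_{\sigma\in\mathrm{Alt}_3}\kappa^C_g(v_{\sigma(2)},v_{\sigma(3)})(gv_{\sigma(1)}-v_{\sigma(1)})$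 and $\sum_{\sigma\in\mathrm{Alt}_3}\sum_{xy=g}\kappa^C_x(v_{\sigma(1)}+yv_{\sigma(1)},\kappa^L_y(v_{\sigma(2)},v_{\sigma(3)}))=0$. *)

theory Defs
  imports "HOL-Analysis.Analysis"
begin

text \<open>V = C^n is modelled as complex ^ 'n with CARD('n) = n.
  S_n is the set of permutations of the index type 'n; the group product is composition.\<close>

type_synonym 'n vec = "complex ^ 'n"
type_synonym 'n perm = "'n \<Rightarrow> 'n"

definition Sn :: "('n::finite) perm set" where
  "Sn = {p. p permutes (UNIV :: 'n set)}"

text \<open>Permutation action: sigma e_i = e_(sigma i), i.e. (sigma v)_j = v_(sigma^-1 j).\<close>
definition act :: "('n::finite) perm \<Rightarrow> ('n::finite) vec \<Rightarrow> ('n::finite) vec" where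
  "act g v = (\<chi> j. v $ (inv g j))"

definition alt_bilin_V :: "(('n::finite) vec \<Rightarrow> ('n::finite) vec \<Rightarrow> ('n::finite) vec) \<Rightarrow> bool" where
  "alt_bilin_V f \<longleftrightarrow>
     (\<forall>a b u v w. f (a *s u + b *s v) w = a *s f u w + b *s f v w) \<and>
     (\<forall>a b u v w. f w (a *s u + b *s v) = a *s f w u + b *s f w v) \<and>
     (\<forall>v. f v v = 0)"

definition alt_bilin_C :: "(('n::finite) vec \<Rightarrow> ('n::finite) vec \<Rightarrow> complex) \<Rightarrow> bool" where
  "alt_bilin_C f \<longleftrightarrow>
     (\<forall>a b u v w. f (a *s u + b *s v) w = a * f u w + b * f v w) \<and>
     (\<forall>a b u v w. f w (a *s u + b *s v) = a * f w u + b * f w v) \<and>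
     (\<forall>v. f v v = 0)"

definition linear_cochain :: "(('n::finite) perm \<Rightarrow> ('n::finite) vec \<Rightarrow> ('n::finite) vec \<Rightarrow> ('n::finite) vec) \<Rightarrow> bool" where
  "linear_cochain \<alpha> \<longleftrightarrow> (\<forall>g\<in>Sn. alt_bilin_V (\<alpha> g))"

definition constant_cochain :: "(('n::finite) perm \<Rightarrow> ('n::finite) vec \<Rightarrow> ('n::finite) vec \<Rightarrow> complex) \<Rightarrow> bool" where
  "constant_cochain \<alpha> \<longleftrightarrow> (\<forall>g\<in>Sn. alt_bilin_C (\<alpha> g))"

definition invariant_L :: "(('n::finite) perm \<Rightarrow> ('n::finite) vec \<Rightarrow> ('n::finite) vec \<Rightarrow> ('n::finite) vec) \<Rightarrow> bool" where
  "invariant_L \<alpha> \<longleftrightarrow> (\<forall>g\<in>Sn. \<forall>h\<in>Sn. \<forall>v w.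
      act h (\<alpha> g v w) = \<alpha> (h \<circ> g \<circ> inv h) (act h v) (act h w))"

definition invariant_C :: "(('n::finite) perm \<Rightarrow> ('n::finite) vec \<Rightarrow> ('n::finite) vec \<Rightarrow> complex) \<Rightarrow> bool" where
  "invariant_C \<alpha> \<longleftrightarrow> (\<forall>g\<in>Sn. \<forall>h\<in>Sn. \<forall>v w.
      \<alpha> g v w = \<alpha> (h \<circ> g \<circ> inv h) (act h v) (act h w))"

text \<open>The product u v of two vectors in S^2(V), realised via the standard embedding
  S^2(V) into V (x) V by symmetrisation: coordinates (i,j) -> u_i v_j + u_j v_i.\<close>
definition sym_prod :: "('n::finite) vec \<Rightarrow> ('n::finite) vec \<Rightarrow> ('n \<times> 'n \<Rightarrow> complex)" where
  "sym_prod u v = (\<lambda>(i, j). u $ i * v $ j + u $ j * v $ i)"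

definition pre_DOA_map :: "(('n::finite) perm \<Rightarrow> ('n::finite) vec \<Rightarrow> ('n::finite) vec \<Rightarrow> ('n::finite) vec) \<Rightarrow> bool" where
  "pre_DOA_map \<kappa> \<longleftrightarrow>
     linear_cochain \<kappa> \<and> invariant_L \<kappa> \<and>
     (\<forall>g\<in>Sn. \<forall>v w. act g (\<kappa> g v w) = \<kappa> g v w) \<and>
     (\<forall>g\<in>Sn. \<forall>v1 v2 v3.
        (\<lambda>ij. sym_prod (\<kappa> g v2 v3) (act g v1 - v1) ij
            + sym_prod (\<kappa> g v3 v1) (act g v2 - v2) ij
            + sym_prod (\<kappa> g v1 v2) (act g v3 - v3) ij) = (\<lambda>ij. 0))"

definition factor_pairs :: "('n::finite) perm \<Rightarrow> (('n::finite) perm \<times> ('n::finite) perm) set" where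
  "factor_pairs g = {(x, y). x \<in> Sn \<and> y \<in> Sn \<and> x \<circ> y = g}"

definition lifts_to_DOA_map :: "(('n::finite) perm \<Rightarrow> ('n::finite) vec \<Rightarrow> ('n::finite) vec \<Rightarrow> ('n::finite) vec) \<Rightarrow> bool" where
  "lifts_to_DOA_map \<kappa>L \<longleftrightarrow>
     (\<exists>\<kappa>C. constant_cochain \<kappa>C \<and> invariant_C \<kappa>C \<and>
       (\<forall>g\<in>Sn. \<forall>v1 v2 v3.
          (\<Sum>(x, y)\<in>factor_pairs g.
               \<kappa>L x (v1 + act y v1) (\<kappa>L y v2 v3)
             + \<kappa>L x (v2 + act y v2) (\<kappa>L y v3 v1)
             + \<kappa>L x (v3 + act y v3) (\<kappa>L y v1 v2))
          = 2 *s (\<kappa>C g v2 v3 *s (act g v1 - v1)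
                 + \<kappa>C g v3 v1 *s (act g v2 - v2)
                 + \<kappa>C g v1 v2 *s (act g v3 - v3))) \<and>
       (\<forall>g\<in>Sn. \<forall>v1 v2 v3.
          (\<Sum>(x, y)\<in>factor_pairs g.
               \<kappa>C x (v1 + act y v1) (\<kappa>L y v2 v3)
             + \<kappa>C x (v2 + act y v2) (\<kappa>L y v3 v1)
             + \<kappa>C x (v3 + act y v3) (\<kappa>L y v1 v2)) = 0))"

end

theory Submission
  imports Defs "HOL-Combinatorics.Cycles"
begin

(* Write \<sigma> for the coordinate sum and 1 for the all-ones vector.  Equivariance and
   antisymmetry force \<kappa>\<^sub>i\<^sub>d(v, w) = a (\<sigma>(w) v - \<sigma>(v) w), with a \<noteq> 0 as \<kappa>\<^sub>i\<^sub>d \<noteq> 0.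
   For g \<noteq> id the pre-Drinfeld condition makes \<kappa>\<^sub>g vanish on pairs of g-fixed vectors;
   as \<kappa>\<^sub>g(1, -) is g-invariant, averaging over the powers of g gives \<kappa>\<^sub>g(1, -) = 0.
   Now evaluate the first lifting condition at v\<^sub>1 = 1, for g \<noteq> id and c = \<kappa>\<^sub>g(v\<^sub>2, v\<^sub>3):
   only the factorisations (id, g) and (g, id) contribute, and the identity reads
   2a (\<sigma>(c) 1 + n c) = g u - u for some u.  The left side is g-fixed because
   im \<kappa>\<^sub>g \<subseteq> V\<^sup>g, and a g-fixed coboundary vanishes; so \<sigma>(c) 1 + n c = 0, whence c = 0. *)

definition coord_sum :: "('n::finite) vec \<Rightarrow> complex" where
  "coord_sum v = (\<Sum>j\<in>UNIV. v $ j)"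

lemma Sn_id: "id \<in> Sn"
  by (simp add: Sn_def)

lemma coord_sum_add: "coord_sum (u + v) = coord_sum u + coord_sum v"
  by (simp add: coord_sum_def sum.distrib)

lemma coord_sum_one: "coord_sum (1 :: ('n::finite) vec) = of_nat CARD('n)"
  by (simp add: coord_sum_def)

lemma act_add: "act g (u + v) = act g u + act g v"
  by (simp add: act_def vec_eq_iff)

lemma act_diff: "act g (u - v) = act g u - act g v"
  by (simp add: act_def vec_eq_iff)

lemma act_scale: "act g (c *s v) = c *s act g v"
  by (simp add: act_def vec_eq_iff)

lemma act_one: "act g 1 = 1"
  by (simp add: act_def vec_eq_iff)

lemma act_id: "act id = id"
  by (simp add: act_def fun_eq_iff vec_eq_iff)

lemma act_sum: "act g (sum f S) = (\<Sum>k\<in>S. act g (f k))"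
  by (simp add: act_def vec_eq_iff)

lemma act_comp:
  assumes "p permutes UNIV" "q permutes UNIV"
  shows "act (p \<circ> q) v = act p (act q v)"
  using assms by (simp add: act_def vec_eq_iff o_inv_distrib permutes_bij)

lemma act_axis:
  assumes "p permutes UNIV"
  shows "act p (axis i c) = axis (p i) c"
  using assms by (auto simp: act_def axis_def vec_eq_iff permutes_inverses)

lemma act_funpow:
  assumes "p permutes UNIV"
  shows "act (p ^^ k) = act p ^^ k"
proof (induction k)
  case 0
  show ?case by (simp only: funpow.simps(1) act_id)
next
  case (Suc k)
  show ?case
  proof
    fix v
    have "act (p ^^ Suc k) v = act p (act (p ^^ k) v)"
      by (simp only: funpow.simps(2) act_comp[OF assms permutes_funpow[OF assms]])
    then show "act (p ^^ Suc k) v = (act p ^^ Suc k) v"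
      by (simp add: Suc.IH)
  qed
qed

lemma act_periodic:
  assumes "p permutes UNIV"
  obtains m where "m > 0" "act p ^^ m = id"
proof -
  obtain m where "p ^^ m = id" "m > 0"
    using permutation_is_nilpotent[OF permutes_imp_permutation[OF finite assms]] by blast
  with that show thesis
    using act_funpow[OF assms, of m] by (simp add: act_id)
qed

lemma orbit_sum_fixed:
  assumes "act p ^^ m = id"
  shows "act p (\<Sum>k<m. (act p ^^ k) v) = (\<Sum>k<m. (act p ^^ k) v)"
proof -
  have "act p (\<Sum>k<m. (act p ^^ k) v) - (\<Sum>k<m. (act p ^^ k) v)
      = (\<Sum>k<m. (act p ^^ Suc k) v - (act p ^^ k) v)"
    by (simp add: act_sum sum_subtractf)
  also have "\<dots> = 0"
    using assms by (simp only: sum_lessThan_telescope[where f = "\<lambda>k. (act p ^^ k) v"]) simp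
  finally show ?thesis by simp
qed

lemma fixed_coboundary_eq_0:
  assumes p: "p permutes UNIV" and fixed: "act p x = x" and cobound: "x = act p u - u"
  shows "x = 0"
proof -
  obtain m where m: "m > 0" "act p ^^ m = id"
    using act_periodic[OF p] by blast
  have "(act p ^^ k) x = x" for k
    by (induction k) (simp_all add: fixed)
  then have "(\<Sum>k<m. (act p ^^ k) x) = of_nat m *\<^sub>R x"
    by (simp add: sum_constant_scaleR del: sum_constant)
  moreover have "(act p ^^ k) x = (act p ^^ Suc k) u - (act p ^^ k) u" for k
    by (induction k) (simp_all add: cobound act_diff)
  then have "(\<Sum>k<m. (act p ^^ k) x) = 0"
    using m(2) by (simp only: sum_lessThan_telescope[where f = "\<lambda>k. (act p ^^ k) u"]) simp
  ultimately show ?thesis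
    using m(1) by simp
qed

lemma additive_invariant_vanishes:
  fixes F :: "('n::finite) vec \<Rightarrow> 'a::real_vector"
  assumes p: "p permutes UNIV" and add: "\<And>u w. F (u + w) = F u + F w"
    and invariant: "\<And>v. F (act p v) = F v"
    and vanishes: "\<And>z. act p z = z \<Longrightarrow> F z = 0"
  shows "F v = 0"
proof -
  obtain m where m: "m > 0" "act p ^^ m = id"
    using act_periodic[OF p] by blast
  interpret F: Modules.additive F
    by unfold_locales (rule add)
  have "F ((act p ^^ k) v) = F v" for k
    by (induction k) (simp_all add: invariant)
  then have "of_nat m *\<^sub>R F v = (\<Sum>k<m. F ((act p ^^ k) v))"
    by (simp add: sum_constant_scaleR del: sum_constant)
  also have "\<dots> = F (\<Sum>k<m. (act p ^^ k) v)"
    by (simp add: F.sum)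
  also have "\<dots> = 0"
    using vanishes orbit_sum_fixed[OF m(2)] by blast
  finally show ?thesis
    using m(1) by simp
qed

context
  fixes K :: "('n::finite) vec \<Rightarrow> 'n vec \<Rightarrow> 'n vec"
  assumes K: "alt_bilin_V K"
begin

lemma alt_bilin_V_linear_left: "K (a *s u + b *s v) w = a *s K u w + b *s K v w"
  using K unfolding alt_bilin_V_def by blast

lemma alt_bilin_V_linear_right: "K w (a *s u + b *s v) = a *s K w u + b *s K w v"
  using K unfolding alt_bilin_V_def by blast

lemma alt_bilin_V_add_left: "K (u + v) w = K u w + K v w"
  using alt_bilin_V_linear_left[of 1 u 1 v w] by simp

lemma alt_bilin_V_add_right: "K w (u + v) = K w u + K w v"
  using alt_bilin_V_linear_right[of w 1 u 1 v] by simp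

lemma alt_bilin_V_scale_left: "K (c *s u) w = c *s K u w"
  using alt_bilin_V_linear_left[of c u 0 u w] by simp

lemma alt_bilin_V_scale_right: "K w (c *s u) = c *s K w u"
  using alt_bilin_V_linear_right[of w c u 0 u] by simp

lemma alt_bilin_V_zero_left: "K 0 w = 0"
  using alt_bilin_V_scale_left[of 0 0 w] by simp

lemma alt_bilin_V_zero_right: "K w 0 = 0"
  using alt_bilin_V_scale_right[of w 0 0] by simp

lemma alt_bilin_V_diff_right: "K w (u - v) = K w u - K w v"
proof -
  have "K w (u - v) + K w v = K w u"
    by (simp only: alt_bilin_V_add_right[symmetric] diff_add_cancel)
  then show ?thesis
    by (simp only: eq_diff_eq)
qed

lemma alt_bilin_V_self: "K v v = 0"
  using K unfolding alt_bilin_V_def by blast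

lemma alt_bilin_V_antisym: "K u w = - K w u"
proof -
  have "K (u + w) (u + w) = K u (u + w) + K w (u + w)"
    by (rule alt_bilin_V_add_left)
  also have "\<dots> = K u w + K w u"
    by (simp add: alt_bilin_V_add_right alt_bilin_V_self)
  finally have "K u w + K w u = 0"
    by (simp add: alt_bilin_V_self)
  then show ?thesis
    by (simp add: eq_neg_iff_add_eq_0)
qed

lemma alt_bilin_V_sum_left: "K (sum f S) w = (\<Sum>k\<in>S. K (f k) w)"
  by (induction S rule: infinite_finite_induct)
    (simp_all add: alt_bilin_V_add_left alt_bilin_V_zero_left)

lemma alt_bilin_V_sum_right: "K w (sum f S) = (\<Sum>k\<in>S. K w (f k))"
  by (induction S rule: infinite_finite_induct)
    (simp_all add: alt_bilin_V_add_right alt_bilin_V_zero_right)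

end

lemma equivariant_alt_bilin_V_basis:
  fixes K :: "('n::finite) vec \<Rightarrow> 'n vec \<Rightarrow> 'n vec"
  assumes K: "alt_bilin_V K"
    and equivariant: "\<And>h v w. h permutes UNIV \<Longrightarrow> act h (K v w) = K (act h v) (act h w)"
  obtains a where "\<And>i j. K (axis i 1) (axis j 1) = a *s (axis i 1 - axis j 1)"
proof -
  (* The transposition (i j) negates K(e\<^sub>i, e\<^sub>j), so this vector is supported on {i, j};
     transpositions fixing i show that its i-th coordinate does not depend on j. *)
  define \<alpha> where "\<alpha> i j = K (axis i 1) (axis j 1) $ i" for i j
  have act_transpose: "act (Transposition.transpose i j) (K v w)
      = K (act (Transposition.transpose i j) v) (act (Transposition.transpose i j) w)" for i j v w
    by (simp add: equivariant permutes_swap_id)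
  have transpose_component:
    "act (Transposition.transpose i j) x $ p = x $ Transposition.transpose i j p" for i j p :: 'n and x
    by (simp add: act_def)
  have basis: "K (axis i 1) (axis j 1) = \<alpha> i j *s (axis i 1 - axis j 1)" if "i \<noteq> j" for i j
  proof -
    let ?x = "K (axis i 1) (axis j 1)"
    have "act (Transposition.transpose i j) ?x = - ?x"
      using alt_bilin_V_antisym[OF K, of "axis j 1" "axis i 1"]
      by (simp add: act_transpose act_axis permutes_swap_id)
    then have swap: "?x $ Transposition.transpose i j p = - ?x $ p" for p
      by (simp flip: transpose_component)
    show ?thesis
    proof (subst vec_eq_iff, intro allI)
      fix p
      show "?x $ p = (\<alpha> i j *s (axis i 1 - axis j 1)) $ p"
        using swap[of i] swap[of p] that by (cases "p = i \<or> p = j") (auto simp: \<alpha>_def axis_def)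
    qed
  qed
  have \<alpha>_sym: "\<alpha> j i = \<alpha> i j" if "i \<noteq> j" for i j
  proof -
    have "\<alpha> j i = - (K (axis i 1) (axis j 1) $ j)"
      using alt_bilin_V_antisym[OF K, of "axis j 1" "axis i 1"] by (simp add: \<alpha>_def)
    also have "\<dots> = \<alpha> i j"
      using that by (simp add: basis[OF that]) (simp add: axis_def)
    finally show ?thesis .
  qed
  have \<alpha>_shift: "\<alpha> i k = \<alpha> i j" if "i \<noteq> j" "i \<noteq> k" for i j k
  proof -
    have "K (axis i 1) (axis k 1) = act (Transposition.transpose j k) (K (axis i 1) (axis j 1))"
      using act_transpose that by (simp add: act_axis permutes_swap_id)
    then show ?thesis
      using that by (simp add: \<alpha>_def transpose_component)
  qed
  obtain a where "\<alpha> i j = a" if "i \<noteq> j" for i j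
  proof (cases "\<exists>i0 j0 :: 'n. i0 \<noteq> j0")
    case True
    then obtain i0 j0 :: 'n where "i0 \<noteq> j0"
      by blast
    have "\<alpha> i j = \<alpha> i0 j0" if "i \<noteq> j" for i j
    proof (cases "i = i0")
      case True
      then show ?thesis
        using \<alpha>_shift[of i0 j0 j] \<open>i0 \<noteq> j0\<close> that by simp
    next
      case False
      have "\<alpha> i j = \<alpha> i i0"
        using \<alpha>_shift[of i j i0] that False by simp
      also have "\<dots> = \<alpha> i0 i"
        using \<alpha>_sym[of i0 i] False by simp
      also have "\<dots> = \<alpha> i0 j0"
        using \<alpha>_shift[of i0 j0 i] \<open>i0 \<noteq> j0\<close> False by simp
      finally show ?thesis .
    qed
    then show thesis
      using that by blast
  qed (use that in blast)
  then have "K (axis i 1) (axis j 1) = a *s (axis i 1 - axis j 1)" for i j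
    using basis alt_bilin_V_self[OF K] by (cases "i = j") auto
  then show thesis
    using that by blast
qed

lemma equivariant_alt_bilin_V_eq:
  fixes K :: "('n::finite) vec \<Rightarrow> 'n vec \<Rightarrow> 'n vec"
  assumes K: "alt_bilin_V K"
    and equivariant: "\<And>h v w. h permutes UNIV \<Longrightarrow> act h (K v w) = K (act h v) (act h w)"
  obtains a where "\<And>v w. K v w = a *s (coord_sum w *s v - coord_sum v *s w)"
proof -
  obtain a where a: "\<And>i j. K (axis i 1) (axis j 1) = a *s (axis i 1 - axis j 1)"
    using equivariant_alt_bilin_V_basis[OF assms] by blast
  have row: "K (axis i 1) w = a *s (coord_sum w *s axis i 1 - w)" for i w
  proof -
    have "K (axis i 1) w = (\<Sum>j\<in>UNIV. w $ j *s (a *s (axis i 1 - axis j 1)))"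
      by (subst basis_expansion[of w, symmetric])
        (simp add: alt_bilin_V_sum_right[OF K] alt_bilin_V_scale_right[OF K] a)
    also have "\<dots> = a *s (coord_sum w *s axis i 1 - w)"
      by (simp add: vec_eq_iff coord_sum_def axis_def algebra_simps sum_distrib_left sum_subtractf
          if_distrib[of "\<lambda>z. _ * z"] cong: if_cong)
    finally show ?thesis .
  qed
  have "K v w = a *s (coord_sum w *s v - coord_sum v *s w)" for v w
  proof -
    have "K v w = (\<Sum>i\<in>UNIV. v $ i *s (a *s (coord_sum w *s axis i 1 - w)))"
      by (subst basis_expansion[of v, symmetric])
        (simp add: alt_bilin_V_sum_left[OF K] alt_bilin_V_scale_left[OF K] row)
    also have "\<dots> = a *s (coord_sum w *s v - coord_sum v *s w)"
      by (simp add: vec_eq_iff coord_sum_def axis_def algebra_simps sum_subtractf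
          sum_distrib_left[symmetric] sum_distrib_right[symmetric])
        (simp add: if_distrib[of "\<lambda>z. _ * z"] cong: if_cong)
    finally show ?thesis .
  qed
  then show thesis
    using that by blast
qed

lemma sym_prod_eq_0_cancel:
  assumes "sym_prod x d = (\<lambda>ij. 0)" and "d \<noteq> 0"
  shows "x = 0"
proof -
  obtain q where q: "d $ q \<noteq> 0"
    using assms(2) by (auto simp: vec_eq_iff)
  have coeff: "x $ p * d $ r + x $ r * d $ p = 0" for p r
    using fun_cong[OF assms(1), of "(p, r)"] by (simp add: sym_prod_def)
  have "x $ q = 0"
    using coeff[of q q] q by simp
  then have "x $ p = 0" for p
    using coeff[of p q] q by simp
  then show ?thesis
    by (simp add: vec_eq_iff)
qed

context
  fixes \<kappa> :: "('n::finite) perm \<Rightarrow> 'n vec \<Rightarrow> 'n vec \<Rightarrow> 'n vec"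
  assumes \<kappa>: "pre_DOA_map \<kappa>"
begin

lemma pre_DOA_map_alt_bilin: "g \<in> Sn \<Longrightarrow> alt_bilin_V (\<kappa> g)"
  using \<kappa> unfolding pre_DOA_map_def linear_cochain_def by blast

lemma pre_DOA_map_image_fixed: "g \<in> Sn \<Longrightarrow> act g (\<kappa> g v w) = \<kappa> g v w"
  using \<kappa> unfolding pre_DOA_map_def by blast

lemma pre_DOA_map_conj:
  "g \<in> Sn \<Longrightarrow> h \<in> Sn \<Longrightarrow> act h (\<kappa> g v w) = \<kappa> (h \<circ> g \<circ> inv h) (act h v) (act h w)"
  using \<kappa> unfolding pre_DOA_map_def invariant_L_def by blast

lemma pre_DOA_map_id_eq:
  obtains a where "\<And>v w. \<kappa> id v w = a *s (coord_sum w *s v - coord_sum v *s w)"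
proof -
  have K: "alt_bilin_V (\<kappa> id)"
    by (simp add: pre_DOA_map_alt_bilin Sn_id)
  have equivariant: "act h (\<kappa> id v w) = \<kappa> id (act h v) (act h w)" if "h permutes UNIV" for h v w
    using pre_DOA_map_conj[of id h v w] that by (simp add: Sn_def permutes_inv_o)
  obtain a where "\<And>v w. \<kappa> id v w = a *s (coord_sum w *s v - coord_sum v *s w)"
    using equivariant_alt_bilin_V_eq[OF K equivariant] by blast
  then show thesis
    by (rule that)
qed

lemma pre_DOA_map_centralizer_invariant:
  assumes "g \<in> Sn"
  shows "\<kappa> g (act g v) (act g w) = \<kappa> g v w"
proof -
  have "g \<circ> g \<circ> inv g = g"
    using assms by (simp add: Sn_def o_assoc[symmetric] permutes_inv_o)
  then show ?thesis
    using pre_DOA_map_conj[OF assms assms, of v w] pre_DOA_map_image_fixed[OF assms] by simp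
qed

lemma pre_DOA_map_vanishes_on_fixed:
  assumes g: "g \<in> Sn" "g \<noteq> id" and fixed: "act g u = u" "act g u' = u'"
  shows "\<kappa> g u u' = 0"
proof -
  obtain i where i: "g i \<noteq> i"
    using g(2) by (auto simp: fun_eq_iff)
  have moved: "act g (axis i 1) - axis i 1 \<noteq> 0"
    using g(1) i by (simp add: Sn_def act_axis axis_eq_axis)
  have "(\<lambda>ij. sym_prod (\<kappa> g u' (axis i 1)) (act g u - u) ij
      + sym_prod (\<kappa> g (axis i 1) u) (act g u' - u') ij
      + sym_prod (\<kappa> g u u') (act g (axis i 1) - axis i 1) ij) = (\<lambda>ij. 0)"
    using \<kappa> g(1) unfolding pre_DOA_map_def by blast
  then have "sym_prod (\<kappa> g u u') (act g (axis i 1) - axis i 1) = (\<lambda>ij. 0)"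
    using fixed by (simp add: sym_prod_def fun_eq_iff)
  then show ?thesis
    using moved by (rule sym_prod_eq_0_cancel)
qed

lemma pre_DOA_map_one_left:
  assumes "g \<in> Sn" "g \<noteq> id"
  shows "\<kappa> g 1 w = 0"
proof (rule additive_invariant_vanishes[where F = "\<kappa> g 1"])
  show "g permutes UNIV"
    using assms(1) by (simp add: Sn_def)
  show "\<kappa> g 1 (u + v) = \<kappa> g 1 u + \<kappa> g 1 v" for u v
    using alt_bilin_V_add_right[OF pre_DOA_map_alt_bilin[OF assms(1)]] .
  show "\<kappa> g 1 (act g v) = \<kappa> g 1 v" for v
    using pre_DOA_map_centralizer_invariant[OF assms(1), of 1 v] by (simp add: act_one)
  show "\<kappa> g 1 z = 0" if "act g z = z" for z
    using pre_DOA_map_vanishes_on_fixed[OF assms act_one that] .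
qed

lemma pre_DOA_map_one_right:
  assumes "g \<in> Sn" "g \<noteq> id"
  shows "\<kappa> g w 1 = 0"
  using alt_bilin_V_antisym[OF pre_DOA_map_alt_bilin[OF assms(1)], of w 1]
    pre_DOA_map_one_left[OF assms]
  by simp

end

lemma factor_pairs_sum_eq:
  fixes T :: "('n::finite) perm \<Rightarrow> 'n perm \<Rightarrow> 'a::comm_monoid_add"
  assumes g: "g \<in> Sn" "g \<noteq> id"
    and vanish: "\<And>x y. x \<in> Sn \<Longrightarrow> y \<in> Sn \<Longrightarrow> x \<noteq> id \<Longrightarrow> y \<noteq> id \<Longrightarrow> T x y = 0"
  shows "(\<Sum>(x, y)\<in>factor_pairs g. T x y) = T id g + T g id"
proof -
  have "{(id, g), (g, id)} \<subseteq> factor_pairs g"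
    using g(1) by (auto simp: factor_pairs_def Sn_def)
  then have "(\<Sum>(x, y)\<in>factor_pairs g. T x y) = (\<Sum>(x, y)\<in>{(id, g), (g, id)}. T x y)"
    by (intro sum.mono_neutral_right) (auto simp: factor_pairs_def intro!: vanish)
  then show ?thesis
    using g(2) by simp
qed

lemma pre_DOA_map_lift_sum_one:
  fixes \<kappa> :: "('n::finite) perm \<Rightarrow> 'n vec \<Rightarrow> 'n vec \<Rightarrow> 'n vec" and v2 v3 :: "'n vec"
  assumes \<kappa>: "pre_DOA_map \<kappa>" and g: "g \<in> Sn" "g \<noteq> id"
    and \<kappa>_id: "\<And>v w. \<kappa> id v w = a *s (coord_sum w *s v - coord_sum v *s w)"
  defines "c \<equiv> \<kappa> g v2 v3"
  shows "(\<Sum>(x, y)\<in>factor_pairs g.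
             \<kappa> x (1 + act y 1) (\<kappa> y v2 v3)
           + \<kappa> x (v2 + act y v2) (\<kappa> y v3 1)
           + \<kappa> x (v3 + act y v3) (\<kappa> y 1 v2))
       = (2 * a) *s (coord_sum c *s 1 + of_nat CARD('n) *s c)"
proof -
  let ?T = "\<lambda>x y. \<kappa> x (1 + act y 1) (\<kappa> y v2 v3)
    + \<kappa> x (v2 + act y v2) (\<kappa> y v3 1) + \<kappa> x (v3 + act y v3) (\<kappa> y 1 v2)"
  let ?N = "of_nat CARD('n) :: complex"
  have K: "alt_bilin_V (\<kappa> x)" if "x \<in> Sn" for x
    using pre_DOA_map_alt_bilin[OF \<kappa> that] .
  have two_ones: "\<kappa> x (1 + 1) w = 0" if "x \<in> Sn" "x \<noteq> id" for x w
    by (simp only: alt_bilin_V_add_left[OF K[OF that(1)]] pre_DOA_map_one_left[OF \<kappa> that] add_0)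
  have "?T x y = 0" if "x \<in> Sn" "y \<in> Sn" "x \<noteq> id" "y \<noteq> id" for x y
    by (simp only: act_one two_ones[OF that(1,3)] pre_DOA_map_one_left[OF \<kappa> that(2,4)]
        pre_DOA_map_one_right[OF \<kappa> that(2,4)] alt_bilin_V_zero_right[OF K[OF that(1)]] add_0)
  then have "(\<Sum>(x, y)\<in>factor_pairs g. ?T x y) = ?T id g + ?T g id"
    by (rule factor_pairs_sum_eq[OF g])
  also have "?T id g = a *s (coord_sum c *s (1 + 1) - (2 * ?N) *s c)"
  proof -
    have "?T id g = \<kappa> id (1 + 1) c"
      by (simp only: act_one pre_DOA_map_one_left[OF \<kappa> g] pre_DOA_map_one_right[OF \<kappa> g]
          alt_bilin_V_zero_right[OF K[OF Sn_id]] c_def[symmetric] add_0_right)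
    then show ?thesis
      by (simp only: \<kappa>_id coord_sum_add coord_sum_one mult_2)
  qed
  also have "?T g id = (4 * a * ?N) *s c"
  proof -
    have "?T g id = \<kappa> g (v2 + v2) (a *s (?N *s v3 - coord_sum v3 *s 1))
                  + \<kappa> g (v3 + v3) (a *s (coord_sum v2 *s 1 - ?N *s v2))"
      by (simp only: act_id id_apply two_ones[OF g] \<kappa>_id coord_sum_one add_0)
    also have "\<dots> = (4 * a * ?N) *s c"
      using alt_bilin_V_antisym[OF K[OF g(1)], of v3 v2]
      by (simp only: alt_bilin_V_add_left[OF K[OF g(1)]] alt_bilin_V_scale_right[OF K[OF g(1)]]
          alt_bilin_V_diff_right[OF K[OF g(1)]] pre_DOA_map_one_right[OF \<kappa> g] c_def[symmetric])
        (simp add: vec_eq_iff algebra_simps)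
    finally show ?thesis .
  qed
  also have "a *s (coord_sum c *s (1 + 1) - (2 * ?N) *s c) + (4 * a * ?N) *s c
      = (2 * a) *s (coord_sum c *s 1 + ?N *s c)"
    by (simp add: vec_eq_iff field_simps)
  finally show ?thesis .
qed

lemma coord_sum_scale_one_add_eq_0:
  fixes c :: "('n::finite) vec"
  assumes "coord_sum c *s 1 + of_nat CARD('n) *s c = 0"
  shows "c = 0"
proof -
  let ?N = "of_nat CARD('n) :: complex"
  have component: "coord_sum c + ?N * c $ p = 0" for p
    using assms by (simp add: vec_eq_iff)
  then have "(\<Sum>p\<in>UNIV. coord_sum c + ?N * c $ p) = 0"
    by simp
  then have "2 * ?N * coord_sum c = 0"
    by (simp add: sum.distrib coord_sum_def sum_distrib_left algebra_simps)
  then have "coord_sum c = 0"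
    by simp
  then show ?thesis
    using component by (simp add: vec_eq_iff)
qed

lemma pre_DOA_map_lift_vanishes:
  fixes \<kappa> :: "('n::finite) perm \<Rightarrow> 'n vec \<Rightarrow> 'n vec \<Rightarrow> 'n vec"
    and \<kappa>C :: "'n perm \<Rightarrow> 'n vec \<Rightarrow> 'n vec \<Rightarrow> complex"
  assumes \<kappa>: "pre_DOA_map \<kappa>" and g: "g \<in> Sn" "g \<noteq> id"
    and \<kappa>_id: "\<And>v w. \<kappa> id v w = a *s (coord_sum w *s v - coord_sum v *s w)" and "a \<noteq> 0"
    and lift: "\<forall>g\<in>Sn. \<forall>v1 v2 v3.
      (\<Sum>(x, y)\<in>factor_pairs g.
           \<kappa> x (v1 + act y v1) (\<kappa> y v2 v3)
         + \<kappa> x (v2 + act y v2) (\<kappa> y v3 v1)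
         + \<kappa> x (v3 + act y v3) (\<kappa> y v1 v2))
      = 2 *s (\<kappa>C g v2 v3 *s (act g v1 - v1)
             + \<kappa>C g v3 v1 *s (act g v2 - v2)
             + \<kappa>C g v1 v2 *s (act g v3 - v3))"
  shows "\<kappa> g v2 v3 = 0"
proof -
  define c where "c = \<kappa> g v2 v3"
  define x where "x = (2 * a) *s (coord_sum c *s 1 + of_nat CARD('n) *s c)"
  define u where "u = 2 *s (\<kappa>C g v3 1 *s v2 + \<kappa>C g 1 v2 *s v3)"
  have "x = 2 *s (\<kappa>C g v2 v3 *s (act g 1 - 1)
             + \<kappa>C g v3 1 *s (act g v2 - v2)
             + \<kappa>C g 1 v2 *s (act g v3 - v3))"
    unfolding x_def c_def
    using pre_DOA_map_lift_sum_one[OF \<kappa> g \<kappa>_id, of v2 v3, symmetric] lift g(1) by simp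
  also have "\<dots> = act g u - u"
    by (simp add: u_def act_one act_add act_diff act_scale vec_eq_iff algebra_simps)
  finally have "x = act g u - u" .
  moreover have "act g x = x"
    using pre_DOA_map_image_fixed[OF \<kappa> g(1)] by (simp add: x_def c_def act_add act_scale act_one)
  ultimately have "x = 0"
    using g(1) by (intro fixed_coboundary_eq_0) (auto simp: Sn_def)
  then have "coord_sum c *s 1 + of_nat CARD('n) *s c = 0"
    using \<open>a \<noteq> 0\<close> unfolding x_def by (simp only: vector_mul_eq_0) simp
  then show ?thesis
    unfolding c_def by (rule coord_sum_scale_one_add_eq_0)
qed

lemma lifts_to_DOA_map_supported_on_id:
  assumes \<kappa>: "pre_DOA_map \<kappa>" and "lifts_to_DOA_map \<kappa>" and "\<kappa> id \<noteq> (\<lambda>v w. 0)"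
    and g: "g \<in> Sn" "g \<noteq> id"
  shows "\<kappa> g = (\<lambda>v w. 0)"
proof -
  obtain a where \<kappa>_id: "\<And>v w. \<kappa> id v w = a *s (coord_sum w *s v - coord_sum v *s w)"
    using pre_DOA_map_id_eq[OF \<kappa>] by blast
  with assms(3) have "a \<noteq> 0"
    by (auto simp: fun_eq_iff)
  from assms(2) show ?thesis
    unfolding lifts_to_DOA_map_def fun_eq_iff
    by (elim exE conjE) (blast intro: pre_DOA_map_lift_vanishes[OF \<kappa> g \<kappa>_id \<open>a \<noteq> 0\<close>])
qed

theorem proposition6p3:
  fixes \<kappa>L :: "('n::finite) perm \<Rightarrow> 'n vec \<Rightarrow> 'n vec \<Rightarrow> 'n vec"
  assumes "CARD('n) \<ge> 3"
    and "pre_DOA_map \<kappa>L"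
    and "\<kappa>L id \<noteq> (\<lambda>v w. 0)"
    and "\<exists>g\<in>Sn. g \<noteq> id \<and> \<kappa>L g \<noteq> (\<lambda>v w. 0)"
  shows "\<not> lifts_to_DOA_map \<kappa>L"
  using assms(4) lifts_to_DOA_map_supported_on_id[OF assms(2) _ assms(3)] by blast

end
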